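(* Let $\mathcal{C}=(C_1,\ldots,C_m)$, $m\ge 2$, be a camera arrangement with centers $c_1,\ldots,c_m$. (1) Let $L\subseteq\mathbb{P}^3$ be a line containing none of the centers. If there are two centers $c_i,c_j$ such that the span of $\{c_i,c_j\}\cup L$ is all of $\mathbb{P}^3$, then $$\mathcal{M}_\mathcal{C}^L=\{(x_1,\ldots,x_m)\in \mathcal{M}_{\mathcal{C}}:\ x_k\in C_k\cdot L \text{ for all } k\}.$$ (2) Let $X\in\mathbb{P}^3$ be a point distinct from all centers. If for each center $c_i$ the line spanned by $c_i$ and $X$ contains no center other than $c_i$, then $$\mathcal{L}_\mathcal{C}^X=\{(\ell_1,\ldots,\ell_m)\in \mathcal{L}_{\mathcal{C}}:\ \ell_k^T C_kX=0 \text{ for all } k\}.$$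
   Context: All spaces are complex projective. A camera is a full-rank $3\times 4$ complex matrix $C$, viewed as a rational map $\mathbb{P}^3\dashrightarrow\mathbb{P}^2$; its center is its kernel. A camera arrangement $\mathcal{C}=(C_1,\ldots,C_m)$, $m\ge2$, is a tuple of cameras with pairwise distinct centers. For a line $L\subseteq\mathbb{P}^3$ spanned by points $u,v$, $C\cdot L:=Cu\times Cv\in\mathbb{P}^2$ (cross product), identified with the image line $\{x\in\mathbb{P}^2: (C\cdot L)^Tx=0\}$; "$x\in C\cdot L$" means $x$ lies on this image line. The point multiview variety $\mathcal{M}_\mathcal{C}\subseteq(\mathbb{P}^2)^m$ is the Zariski closure of the image of $X\mapsto(C_1X,\ldots,C_mX)$; the line multiview variety $\mathcal{L}_\mathcal{C}\subseteq(\mathbb{P}^2)^m$ is the Zariski closure of the image of $L\mapsto(C_1\cdot L,\ldots,C_m\cdot L)$ on the Grassmannian $\mathrm{Gr}(1,\mathbb{P}^3)$ of lines. For a line $L$ containing no center, the anchored point multiview variety $\mathcal{M}_\mathcal{C}^L$ is the Zariski closure of the image of $L\to(\mathbb{P}^2)^m$, $X\mapsto (C_1X,\ldots,C_mX)$. For a point $X$ distinct from all centers, $\Lambda(X)$ denotes the set of lines in $\mathbb{P}^3$ through $X$, and the anchored line multiview variety $\mathcal{L}_\mathcal{C}^X$ is the Zariski closure of the image of $\Lambda(X)\dashrightarrow(\mathbb{P}^2)^m$, $L\mapsto(C_1\cdot L,\ldots,C_m\cdot L)$. *)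

theory Defs
  imports "HOL-Analysis.Analysis"
begin

text \<open>Projective points are represented by nonzero vectors (homogeneous coordinates).
  All sets of points below are sets of representatives, closed under nonzero rescaling
  of each factor.\<close>

definition proj_rep :: "'a::field^'n \<Rightarrow> 'a^'n \<Rightarrow> bool" where
  "proj_rep x y \<longleftrightarrow> y \<noteq> 0 \<and> (\<exists>a. a \<noteq> 0 \<and> x = a *s y)"

text \<open>Bilinear pairing x^T y (no complex conjugation).\<close>
definition bdot :: "complex^'n \<Rightarrow> complex^'n \<Rightarrow> complex" where
  "bdot x y = (\<Sum>i\<in>UNIV. x $ i * y $ i)"

definition cross3c :: "complex^3 \<Rightarrow> complex^3 \<Rightarrow> complex^3" where
  "cross3c u v = vector [u$2 * v$3 - u$3 * v$2, u$3 * v$1 - u$1 * v$3, u$1 * v$2 - u$2 * v$1]"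

definition camera :: "complex^4^3 \<Rightarrow> bool" where
  "camera C \<longleftrightarrow> rank C = 3"

definition center :: "complex^4^3 \<Rightarrow> complex^4" where
  "center C = (SOME c. c \<noteq> 0 \<and> C *v c = 0)"

definition camera_arrangement :: "('m::finite \<Rightarrow> complex^4^3) \<Rightarrow> bool" where
  "camera_arrangement Cs \<longleftrightarrow> CARD('m) \<ge> 2 \<and> (\<forall>k. camera (Cs k)) \<and>
     (\<forall>i j. i \<noteq> j \<longrightarrow> center (Cs i) \<notin> vec.span {center (Cs j)})"

definition is_line :: "complex^4 \<Rightarrow> complex^4 \<Rightarrow> bool" where
  "is_line u v \<longleftrightarrow> u \<noteq> v \<and> vec.independent {u, v}"

text \<open>C \<cdot> L for L = span(u,v).\<close>
definition line_image :: "complex^4^3 \<Rightarrow> complex^4 \<Rightarrow> complex^4 \<Rightarrow> complex^3" where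
  "line_image C u v = cross3c (C *v u) (C *v v)"

text \<open>Variables indexed by 'm \<times> 3 (factor k, coordinate i). A polynomial is a finite set of
  monomials M (exponent functions) with coefficients c.\<close>
definition poly_eval :: "(('m::finite \<times> 3) \<Rightarrow> nat) set \<Rightarrow> ((('m \<times> 3) \<Rightarrow> nat) \<Rightarrow> complex)
    \<Rightarrow> ('m \<Rightarrow> complex^3) \<Rightarrow> complex" where
  "poly_eval M c x = (\<Sum>\<alpha>\<in>M. c \<alpha> * (\<Prod>v\<in>UNIV. (x (fst v) $ snd v) ^ \<alpha> v))"

definition multihom :: "(('m::finite \<times> 3) \<Rightarrow> nat) set \<Rightarrow> ('m \<Rightarrow> nat) \<Rightarrow> bool" where
  "multihom M d \<longleftrightarrow> finite M \<and> (\<forall>\<alpha>\<in>M. \<forall>k. (\<Sum>i\<in>UNIV. \<alpha> (k, i)) = d k)"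

definition ptuples :: "('m::finite \<Rightarrow> complex^3) set" where
  "ptuples = {x. \<forall>k. x k \<noteq> 0}"

definition zclosure :: "('m::finite \<Rightarrow> complex^3) set \<Rightarrow> ('m \<Rightarrow> complex^3) set" where
  "zclosure S = {x \<in> ptuples. \<forall>M c d. multihom M d \<longrightarrow>
      (\<forall>y\<in>S. poly_eval M c y = 0) \<longrightarrow> poly_eval M c x = 0}"

definition point_mv :: "('m::finite \<Rightarrow> complex^4^3) \<Rightarrow> ('m \<Rightarrow> complex^3) set" where
  "point_mv Cs = zclosure {x. \<exists>X. X \<noteq> 0 \<and> (\<forall>k. proj_rep (x k) (Cs k *v X))}"

definition anch_point_mv :: "('m::finite \<Rightarrow> complex^4^3) \<Rightarrow> complex^4 \<Rightarrow> complex^4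
    \<Rightarrow> ('m \<Rightarrow> complex^3) set" where
  "anch_point_mv Cs u v = zclosure {x. \<exists>X\<in>vec.span {u, v}. X \<noteq> 0 \<and>
      (\<forall>k. proj_rep (x k) (Cs k *v X))}"

definition line_mv :: "('m::finite \<Rightarrow> complex^4^3) \<Rightarrow> ('m \<Rightarrow> complex^3) set" where
  "line_mv Cs = zclosure {l. \<exists>u v. is_line u v \<and>
      (\<forall>k. proj_rep (l k) (line_image (Cs k) u v))}"

text \<open>Lines through X are exactly the spans of X and some u independent of X.\<close>
definition anch_line_mv :: "('m::finite \<Rightarrow> complex^4^3) \<Rightarrow> complex^4 \<Rightarrow> ('m \<Rightarrow> complex^3) set" where
  "anch_line_mv Cs X = zclosure {l. \<exists>u. is_line X u \<and>
      (\<forall>k. proj_rep (l k) (line_image (Cs k) X u))}"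

end

theory Submission
  imports Defs
begin

text \<open>
  (1) A tuple of \<open>\<M>\<^sub>\<C>\<close> whose points lie on the image lines \<open>C\<^sub>k \<cdot> L\<close> has the form
  \<open>x\<^sub>k = C\<^sub>k (s\<^sub>k u + t\<^sub>k v)\<close>. Back-projecting, the epipolar constraints valid on
  \<open>\<M>\<^sub>\<C>\<close> become \<open>(s\<^sub>a t\<^sub>b - t\<^sub>a s\<^sub>b) det(c\<^sub>a, u, c\<^sub>b, v) = 0\<close>. Since \<open>c\<^sub>i, c\<^sub>j, L\<close>
  span \<open>P\<^sup>3\<close>, for every \<open>k\<close> one of \<open>det(c\<^sub>i, u, c\<^sub>k, v)\<close>, \<open>det(c\<^sub>j, u, c\<^sub>k, v)\<close> is nonzero,
  so all ratios \<open>(s\<^sub>k : t\<^sub>k)\<close> agree and \<open>x\<close> is the image of a single point of \<open>L\<close>.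

  (2) For \<open>l\<close> in \<open>\<L>\<^sub>\<C>\<close> the back-projected planes \<open>H\<^sub>k = l\<^sub>k\<^sup>T C\<^sub>k\<close> all contain a
  common line, and they contain \<open>X\<close> when \<open>l\<^sub>k\<^sup>T C\<^sub>k X = 0\<close>. If no center lies on every \<open>H\<^sub>k\<close>,
  the \<open>H\<^sub>k\<close> meet in a line through \<open>X\<close> avoiding all centers, whose image is \<open>l\<close>. If the
  center \<open>c\<^sub>j\<close> lies on every \<open>H\<^sub>k\<close>, then \<open>l\<close> is the limit of the images of the lines through
  \<open>X\<close> and \<open>c\<^sub>j + t w\<close> with \<open>w \<in> H\<^sub>j\<close>; by the hypothesis on the lines \<open>c\<^sub>i X\<close> these avoid
  all centers for all but finitely many \<open>t\<close>.
\<close>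

section \<open>Multihomogeneous polynomial functions and the Zariski closure\<close>

definition multihom_poly :: "('m::finite \<Rightarrow> nat) \<Rightarrow> (('m \<Rightarrow> complex^3) \<Rightarrow> complex) \<Rightarrow> bool" where
  "multihom_poly d p \<longleftrightarrow> (\<exists>M c. multihom M d \<and> p = poly_eval M c)"

definition monomial_eval :: "(('m::finite \<times> 3) \<Rightarrow> nat) \<Rightarrow> ('m \<Rightarrow> complex^3) \<Rightarrow> complex" where
  "monomial_eval \<alpha> x = (\<Prod>v\<in>UNIV. (x (fst v) $ snd v) ^ \<alpha> v)"

lemma poly_eval_monomial_eval: "poly_eval M c x = (\<Sum>\<alpha>\<in>M. c \<alpha> * monomial_eval \<alpha> x)"
  by (simp add: poly_eval_def monomial_eval_def)

lemma monomial_eval_add: "monomial_eval (\<lambda>v. \<alpha> v + \<beta> v) x = monomial_eval \<alpha> x * monomial_eval \<beta> x"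
  by (simp add: monomial_eval_def power_add prod.distrib)

lemma multihom_poly_zero: "multihom_poly d (\<lambda>x. 0)"
  unfolding multihom_poly_def
  by (intro exI[of _ "{}"] exI[of _ "\<lambda>_. 0"]) (auto simp: multihom_def poly_eval_def fun_eq_iff)

lemma multihom_poly_const: "multihom_poly (\<lambda>_. 0) (\<lambda>x. a)"
  unfolding multihom_poly_def
  by (intro exI[of _ "{\<lambda>_. 0}"] exI[of _ "\<lambda>_. a"]) (auto simp: multihom_def poly_eval_def fun_eq_iff)

lemma multihom_poly_coordinate: "multihom_poly (\<lambda>k'. if k' = k then 1 else 0) (\<lambda>x. x k $ i)"
proof -
  define \<alpha> where "\<alpha> = (\<lambda>v::'a \<times> 3. if v = (k, i) then 1 else (0::nat))"
  have "monomial_eval \<alpha> x = (\<Prod>v\<in>UNIV. if v = (k, i) then x (fst v) $ snd v else 1)" for x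
    unfolding monomial_eval_def \<alpha>_def by (rule prod.cong) auto
  then have "monomial_eval \<alpha> x = x k $ i" for x
    by (simp add: prod.delta)
  moreover have "multihom {\<alpha>} (\<lambda>k'. if k' = k then 1 else 0)"
    by (auto simp: multihom_def \<alpha>_def sum.delta)
  ultimately show ?thesis
    unfolding multihom_poly_def
    by (intro exI[of _ "{\<alpha>}"] exI[of _ "\<lambda>_. 1"]) (auto simp: poly_eval_monomial_eval fun_eq_iff)
qed

lemma multihom_poly_add:
  assumes "multihom_poly d p" "multihom_poly d q"
  shows "multihom_poly d (\<lambda>x. p x + q x)"
proof -
  obtain M1 c1 where 1: "multihom M1 d" "p = poly_eval M1 c1"
    using assms(1) multihom_poly_def by blast
  obtain M2 c2 where 2: "multihom M2 d" "q = poly_eval M2 c2"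
    using assms(2) multihom_poly_def by blast
  have fin: "finite M1" "finite M2" using 1 2 by (auto simp: multihom_def)
  define c where "c \<gamma> = (if \<gamma> \<in> M1 then c1 \<gamma> else 0) + (if \<gamma> \<in> M2 then c2 \<gamma> else 0)" for \<gamma>
  have "poly_eval (M1 \<union> M2) c x = p x + q x" for x
  proof -
    have "poly_eval (M1 \<union> M2) c x
        = (\<Sum>\<gamma>\<in>M1 \<union> M2. if \<gamma> \<in> M1 then c1 \<gamma> * monomial_eval \<gamma> x else 0)
        + (\<Sum>\<gamma>\<in>M1 \<union> M2. if \<gamma> \<in> M2 then c2 \<gamma> * monomial_eval \<gamma> x else 0)"
      unfolding poly_eval_monomial_eval c_def sum.distrib[symmetric]
      by (intro sum.cong refl) (auto simp: algebra_simps)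
    also have "\<dots> = poly_eval M1 c1 x + poly_eval M2 c2 x"
      using fin by (simp add: sum.inter_restrict[symmetric] Int_absorb1 poly_eval_monomial_eval)
    finally show ?thesis using 1 2 by simp
  qed
  moreover have "multihom (M1 \<union> M2) d" using 1 2 by (auto simp: multihom_def)
  ultimately show ?thesis
    unfolding multihom_poly_def by (intro exI[of _ "M1 \<union> M2"] exI[of _ c]) auto
qed

lemma multihom_poly_mult:
  assumes "multihom_poly d p" "multihom_poly e q"
  shows "multihom_poly (\<lambda>k. d k + e k) (\<lambda>x. p x * q x)"
proof -
  obtain M1 c1 where 1: "multihom M1 d" "p = poly_eval M1 c1"
    using assms(1) multihom_poly_def by blast
  obtain M2 c2 where 2: "multihom M2 e" "q = poly_eval M2 c2"
    using assms(2) multihom_poly_def by blast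
  have fin: "finite M1" "finite M2" using 1 2 by (auto simp: multihom_def)
  define h where "h = (\<lambda>(\<alpha>::'a \<times> 3 \<Rightarrow> nat, \<beta>::'a \<times> 3 \<Rightarrow> nat). (\<lambda>v. \<alpha> v + \<beta> v))"
  define c where "c \<gamma> = (\<Sum>ab\<in>{ab \<in> M1 \<times> M2. h ab = \<gamma>}. c1 (fst ab) * c2 (snd ab))" for \<gamma>
  have "poly_eval (h ` (M1 \<times> M2)) c x = p x * q x" for x
  proof -
    have "poly_eval (h ` (M1 \<times> M2)) c x
        = (\<Sum>\<gamma>\<in>h ` (M1 \<times> M2). \<Sum>ab\<in>{ab \<in> M1 \<times> M2. h ab = \<gamma>}.
             c1 (fst ab) * c2 (snd ab) * monomial_eval (h ab) x)"
      unfolding poly_eval_monomial_eval c_def sum_distrib_right by (intro sum.cong refl) auto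
    also have "\<dots> = (\<Sum>ab\<in>M1 \<times> M2. c1 (fst ab) * c2 (snd ab) * monomial_eval (h ab) x)"
      using fin by (subst sum.image_gen[symmetric]) auto
    also have "\<dots> = (\<Sum>ab\<in>M1 \<times> M2.
        (c1 (fst ab) * monomial_eval (fst ab) x) * (c2 (snd ab) * monomial_eval (snd ab) x))"
      by (intro sum.cong refl) (auto simp: h_def monomial_eval_add)
    also have "\<dots> = p x * q x"
      using 1 2 by (simp add: poly_eval_monomial_eval sum_product sum.cartesian_product split_def)
    finally show ?thesis .
  qed
  moreover have "multihom (h ` (M1 \<times> M2)) (\<lambda>k. d k + e k)"
    using 1 2 fin unfolding multihom_def h_def by (auto simp: sum.distrib)
  ultimately show ?thesis
    unfolding multihom_poly_def by (intro exI[of _ "h ` (M1 \<times> M2)"] exI[of _ c]) (auto simp: fun_eq_iff)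
qed

lemma multihom_poly_cmult: "multihom_poly d p \<Longrightarrow> multihom_poly d (\<lambda>x. a * p x)"
  using multihom_poly_mult[OF multihom_poly_const] by fastforce

lemma multihom_poly_sum:
  "finite I \<Longrightarrow> (\<And>i. i \<in> I \<Longrightarrow> multihom_poly d (p i)) \<Longrightarrow> multihom_poly d (\<lambda>x. \<Sum>i\<in>I. p i x)"
  by (induction I rule: finite_induct) (auto intro: multihom_poly_zero multihom_poly_add)

lemma multihom_poly_prod:
  "finite I \<Longrightarrow> (\<And>i. i \<in> I \<Longrightarrow> multihom_poly (d i) (p i)) \<Longrightarrow>
    multihom_poly (\<lambda>k. \<Sum>i\<in>I. d i k) (\<lambda>x. \<Prod>i\<in>I. p i x)"
proof (induction I rule: finite_induct)
  case empty
  then show ?case using multihom_poly_const[of 1] by simp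
next
  case (insert i I)
  then show ?case using multihom_poly_mult[of "d i" "p i"] by simp
qed

lemma multihom_poly_det:
  fixes A :: "('m::finite \<Rightarrow> complex^3) \<Rightarrow> complex^'n^'n"
  assumes "\<And>i j. multihom_poly (d i) (\<lambda>x. A x $ i $ j)"
  shows "multihom_poly (\<lambda>k. \<Sum>i\<in>UNIV. d i k) (\<lambda>x. det (A x))"
  unfolding det_def
  by (intro multihom_poly_sum multihom_poly_cmult multihom_poly_prod assms finite_permutations) auto

lemma multihom_poly_matrix_vector_nth:
  fixes A :: "complex^3^'n"
  shows "multihom_poly (\<lambda>k'. if k' = k then 1 else 0) (\<lambda>x. (A *v x k) $ j)"
  unfolding matrix_vector_mult_def
  by (simp, intro multihom_poly_sum multihom_poly_cmult multihom_poly_coordinate) auto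

lemma multihom_poly_det_rows:
  fixes A :: "('m::finite \<Rightarrow> complex^3) \<Rightarrow> complex^'n^'n"
  assumes "\<And>i. (\<exists>w. \<forall>x. A x $ i = w) \<or> (\<exists>k (M::complex^3^'n). \<forall>x. A x $ i = M *v x k)"
  shows "\<exists>d. multihom_poly d (\<lambda>x. det (A x))"
proof -
  have "\<exists>e. \<forall>j. multihom_poly e (\<lambda>x. A x $ i $ j)" for i
    using assms[of i] multihom_poly_const multihom_poly_matrix_vector_nth by fastforce
  then obtain d where "\<And>i j. multihom_poly (d i) (\<lambda>x. A x $ i $ j)" by metis
  then show ?thesis by (blast intro: multihom_poly_det)
qed

lemma zclosure_mono: "S \<subseteq> T \<Longrightarrow> zclosure S \<subseteq> zclosure T"
  unfolding zclosure_def by blast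

lemma zclosureI: "x \<in> S \<Longrightarrow> x \<in> ptuples \<Longrightarrow> x \<in> zclosure S"
  unfolding zclosure_def by blast

lemma zclosure_subset_ptuples: "zclosure S \<subseteq> ptuples"
  unfolding zclosure_def by blast

lemma zclosure_vanishing:
  "x \<in> zclosure S \<Longrightarrow> multihom_poly d p \<Longrightarrow> (\<And>y. y \<in> S \<Longrightarrow> p y = 0) \<Longrightarrow> p x = 0"
  unfolding zclosure_def multihom_poly_def by auto

text \<open>Along the affine line \<open>t \<mapsto> P + t Q\<close> a polynomial is continuous in \<open>t\<close>, so vanishing
  for all but finitely many \<open>t\<close> forces vanishing at \<open>t = 0\<close>.\<close>
lemma zclosure_line_limit:
  fixes P Q :: "'m::finite \<Rightarrow> complex^3"
  assumes "P \<in> ptuples" "finite F" "\<And>t. t \<notin> F \<Longrightarrow> (\<lambda>k. P k + t *s Q k) \<in> S"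
  shows "P \<in> zclosure S"
  unfolding zclosure_def
proof (intro CollectI conjI allI impI assms(1))
  fix M c d assume vanish: "\<forall>y\<in>S. poly_eval M c y = 0"
  define f where "f t = poly_eval M c (\<lambda>k. P k + t *s Q k)" for t
  have "continuous_on UNIV f"
    unfolding f_def poly_eval_def by (simp, intro continuous_intros)
  then have "(f \<longlongrightarrow> f 0) (at 0)" by (simp add: continuous_on_def)
  moreover have "eventually (\<lambda>t. \<forall>y\<in>F. t \<noteq> y) (at (0::complex))"
    using assms(2) by (intro eventually_ball_finite) (auto intro: eventually_neq_at_within)
  then have "eventually (\<lambda>t. f t = 0) (at 0)"
    by eventually_elim (use assms(3) vanish in \<open>auto simp: f_def\<close>)
  then have "(f \<longlongrightarrow> 0) (at 0)" by (rule tendsto_eventually)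
  ultimately have "f 0 = 0" using LIM_unique by blast
  then show "poly_eval M c P = 0" by (simp add: f_def)
qed

lemma bdot_add_left: "bdot (x + y) z = bdot x z + bdot y z"
  and bdot_add_right: "bdot z (x + y) = bdot z x + bdot z y"
  and bdot_diff_left: "bdot (x - y) z = bdot x z - bdot y z"
  and bdot_diff_right: "bdot z (x - y) = bdot z x - bdot z y"
  and bdot_scale_left: "bdot (a *s x) z = a * bdot x z"
  and bdot_scale_right: "bdot z (a *s x) = a * bdot z x"
  by (simp_all add: bdot_def algebra_simps sum.distrib sum_subtractf sum_distrib_left)

lemmas bdot_bilinear = bdot_add_left bdot_add_right bdot_diff_left bdot_diff_right
  bdot_scale_left bdot_scale_right

lemma bdot_zero_left [simp]: "bdot 0 z = 0"
  and bdot_zero_right [simp]: "bdot z 0 = 0"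
  by (simp_all add: bdot_def)

lemma bdot_commute: "bdot x y = bdot y x"
  by (simp add: bdot_def mult.commute)

lemma bdot_3: "bdot (x::complex^3) y = x$1 * y$1 + x$2 * y$2 + x$3 * y$3"
  by (simp add: bdot_def sum_3)

lemma bdot_axis: "bdot (axis i 1) z = z $ i"
proof -
  have "bdot (axis i 1) z = (\<Sum>j\<in>UNIV. if j = i then z $ j else 0)"
    unfolding bdot_def axis_def by (intro sum.cong) auto
  then show ?thesis by (simp add: sum.delta')
qed

lemma matrix_vector_nth_bdot: "(A *v z) $ i = bdot (A $ i) z"
  by (simp add: matrix_vector_mult_def bdot_def)

lemma bdot_vector_matrix: "bdot (l v* C) w = bdot l (C *v w)"
  unfolding bdot_def matrix_vector_mult_def vector_matrix_mult_def
  by (simp add: sum_distrib_left sum_distrib_right mult_ac) (rule sum.swap)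

lemma bdot_all_zero_imp_zero: "(\<And>w. bdot w z = 0) \<Longrightarrow> z = 0"
  by (metis bdot_axis vec_eq_iff zero_index)

lemma multihom_poly_bdot: "multihom_poly (\<lambda>k'. if k' = k then 1 else 0) (\<lambda>x. bdot w (x k))"
  unfolding bdot_def by (intro multihom_poly_sum multihom_poly_cmult multihom_poly_coordinate) auto

lemma cross3c_nth:
  "cross3c u v $ 1 = u$2 * v$3 - u$3 * v$2"
  "cross3c u v $ 2 = u$3 * v$1 - u$1 * v$3"
  "cross3c u v $ 3 = u$1 * v$2 - u$2 * v$1"
  by (simp_all add: cross3c_def)

lemma bdot_cross3c_left: "bdot (cross3c a b) a = 0"
  and bdot_cross3c_right: "bdot (cross3c a b) b = 0"
  by (simp_all add: bdot_3 cross3c_nth algebra_simps)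

lemma cross3c_add_right: "cross3c a (b + c) = cross3c a b + cross3c a c"
  and cross3c_scale_right: "cross3c a (s *s b) = s *s cross3c a b"
  by (simp_all add: vec_eq_iff forall_3 cross3c_nth algebra_simps)

lemma cross3c_zero_right [simp]: "cross3c a 0 = 0"
  by (simp add: vec_eq_iff forall_3 cross3c_nth)

lemma cross3c_eq_0_imp_dependent:
  assumes "cross3c a b = 0"
  shows "\<exists>\<alpha> \<beta>. (\<alpha> \<noteq> 0 \<or> \<beta> \<noteq> 0) \<and> \<alpha> *s a + \<beta> *s b = 0"
proof (cases "a = 0")
  case True
  then show ?thesis by (intro exI[of _ 1] exI[of _ 0]) simp
next
  case False
  then obtain i where i: "a $ i \<noteq> 0" by (auto simp: vec_eq_iff)
  have "a$2 * b$3 = a$3 * b$2" "a$3 * b$1 = a$1 * b$3" "a$1 * b$2 = a$2 * b$1"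
    using assms by (auto simp: vec_eq_iff forall_3 cross3c_nth)
  then have "(b $ i) *s a + (- (a $ i)) *s b = 0"
    using exhaust_3[of i] by (auto simp: vec_eq_iff forall_3 algebra_simps)
  then show ?thesis using i by (metis neg_equal_0_iff_equal)
qed

lemma proj_rep_cross3c:
  assumes "l \<noteq> 0" "bdot l a = 0" "bdot l b = 0" "cross3c a b \<noteq> 0"
  shows "proj_rep l (cross3c a b)"
proof -
  let ?n = "cross3c a b"
  obtain i where i: "?n $ i \<noteq> 0" using assms(4) by (auto simp: vec_eq_iff)
  have "l$1*a$1 + l$2*a$2 + l$3*a$3 = 0" "l$1*b$1 + l$2*b$2 + l$3*b$3 = 0"
    using assms(2,3) by (simp_all add: bdot_3)
  then have "l$2 * ?n$3 = l$3 * ?n$2" "l$3 * ?n$1 = l$1 * ?n$3" "l$1 * ?n$2 = l$2 * ?n$1"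
    unfolding cross3c_nth by algebra+
  then have l: "l = (l $ i / ?n $ i) *s ?n"
    using exhaust_3[of i] i by (auto simp: vec_eq_iff forall_3 field_simps)
  then have "l $ i \<noteq> 0" using assms(1) by force
  then show ?thesis
    unfolding proj_rep_def using assms(4) l i by (intro conjI exI[of _ "l $ i / ?n $ i"]) auto
qed

lemma det_eq_0_imp_kernel:
  fixes A :: "'a::field^'n^'n"
  assumes "det A = 0"
  shows "\<exists>x. x \<noteq> 0 \<and> A *v x = 0"
  using assms invertible_det_nz invertible_left_inverse matrix_left_invertible_ker by metis

lemma det_eq_0_imp_left_kernel:
  fixes A :: "'a::field^'n^'n"
  assumes "det A = 0"
  shows "\<exists>y. y \<noteq> 0 \<and> y v* A = 0"
  using det_eq_0_imp_kernel[of "transpose A"] assms by simp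

lemma det_neq_0_kernel:
  fixes A :: "'a::field^'n^'n"
  shows "det A \<noteq> 0 \<Longrightarrow> A *v x = 0 \<Longrightarrow> x = 0"
  by (metis invertible_det_nz inj_matrix_vector_mult injD matrix_vector_mult_0_right)

definition rows3 :: "'a^3 \<Rightarrow> 'a^3 \<Rightarrow> 'a^3 \<Rightarrow> 'a^3^3" where
  "rows3 a b c = (\<chi> i. if i = 1 then a else if i = 2 then b else c)"

lemma rows3_nth [simp]: "rows3 a b c $ 1 = a" "rows3 a b c $ 2 = b" "rows3 a b c $ 3 = c"
  by (simp_all add: rows3_def)

lemma det_rows3_cross3c: "det (rows3 a b x) = bdot (cross3c a b) x"
  by (simp add: det_3 bdot_3 cross3c_nth algebra_simps)

lemma det_rows3_eq_0_imp_dependent: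
  fixes a b c :: "'a::field^3"
  assumes "det (rows3 a b c) = 0"
  shows "\<exists>y1 y2 y3. (y1 \<noteq> 0 \<or> y2 \<noteq> 0 \<or> y3 \<noteq> 0) \<and> y1 *s a + y2 *s b + y3 *s c = 0"
proof -
  obtain y where "y \<noteq> 0" "y v* rows3 a b c = 0"
    using det_eq_0_imp_left_kernel[OF assms] by blast
  then show ?thesis
    by (intro exI[of _ "y$1"] exI[of _ "y$2"] exI[of _ "y$3"])
      (auto simp: vec_eq_iff forall_3 vector_matrix_mult_def sum_3 mult.commute)
qed

definition rows4 :: "'a^4 \<Rightarrow> 'a^4 \<Rightarrow> 'a^4 \<Rightarrow> 'a^4 \<Rightarrow> 'a^4^4" where
  "rows4 a b c d = (\<chi> i. if i = 1 then a else if i = 2 then b else if i = 3 then c else d)"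

lemma rows4_nth [simp]:
  "rows4 a b c d $ 1 = a" "rows4 a b c d $ 2 = b" "rows4 a b c d $ 3 = c" "rows4 a b c d $ 4 = d"
  by (simp_all add: rows4_def)

definition det4 :: "complex^4 \<Rightarrow> complex^4 \<Rightarrow> complex^4 \<Rightarrow> complex^4 \<Rightarrow> complex" where
  "det4 a b c d = det (rows4 a b c d)"

lemma det_4:
  "det (A::'a::comm_ring_1^4^4) =
 A$1$1*A$2$2*A$3$3*A$4$4 - A$1$1*A$2$2*A$3$4*A$4$3 - A$1$1*A$2$3*A$3$2*A$4$4 + A$1$1*A$2$3*A$3$4*A$4$2 + A$1$1*A$2$4*A$3$2*A$4$3 - A$1$1*A$2$4*A$3$3*A$4$2
 - A$1$2*A$2$1*A$3$3*A$4$4 + A$1$2*A$2$1*A$3$4*A$4$3 + A$1$2*A$2$3*A$3$1*A$4$4 - A$1$2*A$2$3*A$3$4*A$4$1 - A$1$2*A$2$4*A$3$1*A$4$3 + A$1$2*A$2$4*A$3$3*A$4$1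
 + A$1$3*A$2$1*A$3$2*A$4$4 - A$1$3*A$2$1*A$3$4*A$4$2 - A$1$3*A$2$2*A$3$1*A$4$4 + A$1$3*A$2$2*A$3$4*A$4$1 + A$1$3*A$2$4*A$3$1*A$4$2 - A$1$3*A$2$4*A$3$2*A$4$1
 - A$1$4*A$2$1*A$3$2*A$4$3 + A$1$4*A$2$1*A$3$3*A$4$2 + A$1$4*A$2$2*A$3$1*A$4$3 - A$1$4*A$2$2*A$3$3*A$4$1 - A$1$4*A$2$3*A$3$1*A$4$2 + A$1$4*A$2$3*A$3$2*A$4$1"
proof -
  have f1: "finite {2::4, 3, 4}" "1 \<notin> {2::4, 3, 4}"
    and f2: "finite {3::4, 4}" "2 \<notin> {3::4, 4}"
    and f3: "finite {4::4}" "3 \<notin> {4::4}"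
    by auto
  show ?thesis
    unfolding det_def UNIV_4 sum_over_permutations_insert[OF f1]
      sum_over_permutations_insert[OF f2] sum_over_permutations_insert[OF f3] permutes_sing
    by (simp add: sign_swap_id permutation_swap_id permutation_compose sign_compose sign_id
        swap_id_eq algebra_simps)
qed

lemma det4_expand: "det4 a b c d =
 a$1*b$2*c$3*d$4 - a$1*b$2*c$4*d$3 - a$1*b$3*c$2*d$4 + a$1*b$3*c$4*d$2 + a$1*b$4*c$2*d$3 - a$1*b$4*c$3*d$2
 - a$2*b$1*c$3*d$4 + a$2*b$1*c$4*d$3 + a$2*b$3*c$1*d$4 - a$2*b$3*c$4*d$1 - a$2*b$4*c$1*d$3 + a$2*b$4*c$3*d$1
 + a$3*b$1*c$2*d$4 - a$3*b$1*c$4*d$2 - a$3*b$2*c$1*d$4 + a$3*b$2*c$4*d$1 + a$3*b$4*c$1*d$2 - a$3*b$4*c$2*d$1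
 - a$4*b$1*c$2*d$3 + a$4*b$1*c$3*d$2 + a$4*b$2*c$1*d$3 - a$4*b$2*c$3*d$1 - a$4*b$3*c$1*d$2 + a$4*b$3*c$2*d$1"
  unfolding det4_def det_4 by simp

lemma det4_multilinear:
  "det4 (x + y) b c d = det4 x b c d + det4 y b c d"
  "det4 a (x + y) c d = det4 a x c d + det4 a y c d"
  "det4 a b (x + y) d = det4 a b x d + det4 a b y d"
  "det4 a b c (x + y) = det4 a b c x + det4 a b c y"
  "det4 (s *s x) b c d = s * det4 x b c d"
  "det4 a (s *s x) c d = s * det4 a x c d"
  "det4 a b (s *s x) d = s * det4 a b x d"
  "det4 a b c (s *s x) = s * det4 a b c x"
  by (simp_all add: det4_expand algebra_simps)

lemma det4_alternating:
  "det4 a a c d = 0" "det4 a b a d = 0" "det4 a b c a = 0"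
  "det4 a b b d = 0" "det4 a b c b = 0" "det4 a b c c = 0"
  by (simp_all add: det4_expand algebra_simps)

lemma det4_swap_24: "det4 a d c b = - det4 a b c d"
  by (simp add: det4_expand algebra_simps)

lemma det4_zero_row: "det4 a b c 0 = 0"
  by (simp add: det4_expand)

lemma rows4_mult_eq_0_iff:
  "rows4 a b c d *v z = 0 \<longleftrightarrow> bdot a z = 0 \<and> bdot b z = 0 \<and> bdot c z = 0 \<and> bdot d z = 0"
  by (simp add: vec_eq_iff forall_4 matrix_vector_nth_bdot)

lemma det4_neq_0_no_common_zero:
  "det4 a b c d \<noteq> 0 \<Longrightarrow> bdot a z = 0 \<Longrightarrow> bdot b z = 0 \<Longrightarrow> bdot c z = 0 \<Longrightarrow> bdot d z = 0 \<Longrightarrow> z = 0"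
  using det_neq_0_kernel[of "rows4 a b c d" z] by (simp add: det4_def rows4_mult_eq_0_iff)

lemma det4_eq_0_common_zero:
  "det4 a b c d = 0 \<Longrightarrow> \<exists>z. z \<noteq> 0 \<and> bdot a z = 0 \<and> bdot b z = 0 \<and> bdot c z = 0 \<and> bdot d z = 0"
  using det_eq_0_imp_kernel[of "rows4 a b c d"] by (simp add: det4_def rows4_mult_eq_0_iff)

lemma exists_common_zero3: "\<exists>z. z \<noteq> 0 \<and> bdot a z = 0 \<and> bdot b z = 0 \<and> bdot (c::complex^4) z = 0"
  using det4_eq_0_common_zero[OF det4_zero_row] by blast

lemma det4_eq_0_imp_dependent:
  assumes "det4 a b c d = 0"
  shows "\<exists>y1 y2 y3 y4. (y1 \<noteq> 0 \<or> y2 \<noteq> 0 \<or> y3 \<noteq> 0 \<or> y4 \<noteq> 0) \<and>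
     y1 *s a + y2 *s b + y3 *s c + y4 *s d = 0"
proof -
  obtain y where "y \<noteq> 0" "y v* rows4 a b c d = 0"
    using det_eq_0_imp_left_kernel assms unfolding det4_def by blast
  then show ?thesis
    by (intro exI[of _ "y$1"] exI[of _ "y$2"] exI[of _ "y$3"] exI[of _ "y$4"])
      (auto simp: vec_eq_iff forall_4 vector_matrix_mult_def sum_4 mult.commute)
qed

lemma det4_neq_0_if_span_UNIV:
  assumes "vec.span {a, b, c, d} = UNIV"
  shows "det4 a b c d \<noteq> 0"
proof
  assume "det4 a b c d = 0"
  then obtain z where z: "z \<noteq> 0" "bdot a z = 0" "bdot b z = 0" "bdot c z = 0" "bdot d z = 0"
    using det4_eq_0_common_zero by blast
  have "bdot w z = 0" for w
  proof -
    have "w \<in> vec.span {a, b, c, d}" using assms by simp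
    then show ?thesis
      by (induction rule: vec.span_induct_alt) (use z in \<open>auto simp: bdot_bilinear\<close>)
  qed
  then show False using z(1) bdot_all_zero_imp_zero by blast
qed

definition indep2 :: "'a::field^'n \<Rightarrow> 'a^'n \<Rightarrow> bool" where
  "indep2 a b \<longleftrightarrow> (\<forall>\<alpha> \<beta>. \<alpha> *s a + \<beta> *s b = 0 \<longrightarrow> \<alpha> = 0 \<and> \<beta> = 0)"

definition indep3 :: "'a::field^'n \<Rightarrow> 'a^'n \<Rightarrow> 'a^'n \<Rightarrow> bool" where
  "indep3 a b c \<longleftrightarrow>
    (\<forall>\<alpha> \<beta> \<gamma>. \<alpha> *s a + \<beta> *s b + \<gamma> *s c = 0 \<longrightarrow> \<alpha> = 0 \<and> \<beta> = 0 \<and> \<gamma> = 0)"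

lemma indep2D: "indep2 a b \<Longrightarrow> \<alpha> *s a + \<beta> *s b = 0 \<Longrightarrow> \<alpha> = 0 \<and> \<beta> = 0"
  unfolding indep2_def by blast

lemma indep3D: "indep3 a b c \<Longrightarrow> \<alpha> *s a + \<beta> *s b + \<gamma> *s c = 0 \<Longrightarrow> \<alpha> = 0 \<and> \<beta> = 0 \<and> \<gamma> = 0"
  unfolding indep3_def by blast

lemma indep2_commute: "indep2 a b \<longleftrightarrow> indep2 b a"
  unfolding indep2_def by (metis add.commute)

lemma indep2_nonzero: "indep2 a b \<Longrightarrow> a \<noteq> 0 \<and> b \<noteq> 0"
  using indep2D[of a b 1 0] indep2D[of a b 0 1] by auto

lemma span_singleton_iff: "x \<in> vec.span {a} \<longleftrightarrow> (\<exists>\<mu>. x = \<mu> *s a)"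
  by (auto simp: vec.span_singleton)

lemma span_pair_iff: "x \<in> vec.span {a, b} \<longleftrightarrow> (\<exists>\<alpha> \<beta>. x = \<alpha> *s a + \<beta> *s b)"
proof -
  have "x \<in> vec.span {a, b} \<longleftrightarrow> (\<exists>\<alpha> \<beta>. x - \<alpha> *s a = \<beta> *s b)"
    using vec.span_insert[of a "{b}"] by (auto simp: span_singleton_iff)
  also have "\<dots> \<longleftrightarrow> (\<exists>\<alpha> \<beta>. x = \<alpha> *s a + \<beta> *s b)"
    by (metis add_diff_cancel_left' diff_add_cancel add.commute)
  finally show ?thesis .
qed

lemma smult_add_eq_0_solve:
  fixes x y :: "'a::field^'n"
  assumes "\<alpha> \<noteq> 0" "\<alpha> *s x + y = 0"
  shows "x = (- inverse \<alpha>) *s y"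
proof -
  have "x = inverse \<alpha> *s (\<alpha> *s x)" using assms(1) by (simp add: vector_smult_assoc)
  also have "\<alpha> *s x = - y" using assms(2) by (simp add: eq_neg_iff_add_eq_0)
  finally show ?thesis by (simp add: vector_smult_lneg vector_smult_rneg)
qed

lemma indep2_iff_not_in_span:
  assumes "b \<noteq> 0"
  shows "indep2 a b \<longleftrightarrow> a \<notin> vec.span {b}"
proof
  assume "indep2 a b"
  show "a \<notin> vec.span {b}"
  proof
    assume "a \<in> vec.span {b}"
    then obtain \<mu> where "a = \<mu> *s b" by (auto simp: span_singleton_iff)
    then have "1 *s a + (- \<mu>) *s b = 0" by (simp add: vector_smult_lneg)
    then show False using indep2D[OF \<open>indep2 a b\<close>] by fastforce
  qed
next
  assume a: "a \<notin> vec.span {b}"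
  show "indep2 a b"
    unfolding indep2_def
  proof (intro allI impI)
    fix \<alpha> \<beta> assume ab: "\<alpha> *s a + \<beta> *s b = 0"
    have "\<alpha> = 0"
    proof (rule ccontr)
      assume "\<alpha> \<noteq> 0"
      then have "a = (- inverse \<alpha>) *s (\<beta> *s b)"
        using ab by (rule smult_add_eq_0_solve)
      moreover have "(- inverse \<alpha>) *s (\<beta> *s b) \<in> vec.span {b}"
        by (intro vec.span_scale vec.span_base) auto
      ultimately show False using a by simp
    qed
    then show "\<alpha> = 0 \<and> \<beta> = 0" using ab assms by simp
  qed
qed

lemma is_line_iff_indep2: "is_line u v \<longleftrightarrow> indep2 u v"
proof -
  have "indep2 u v \<Longrightarrow> u \<noteq> v"
    using indep2D[of u v 1 "-1"] by auto
  then show ?thesis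
    unfolding is_line_def
    using indep2_nonzero[of u v] indep2_iff_not_in_span[of v u]
    by (auto simp: vec.independent_insert)
qed

lemma indep3_imp_indep2_shift: "indep3 a b c \<Longrightarrow> indep2 a (b + t *s c)"
  unfolding indep2_def
  using indep3D[of a b c _ _ "_ * t"]
  by (simp add: vector_add_ldistrib vector_smult_assoc add.assoc)

lemma indep3_imp_indep2_13: "indep3 a b c \<Longrightarrow> indep2 a c"
  using indep3D[of a b c _ 0] unfolding indep2_def by simp

lemma indep3_imp_not_in_span_23:
  assumes "indep3 a b c"
  shows "b \<notin> vec.span {a, c}"
proof
  assume "b \<in> vec.span {a, c}"
  then obtain \<alpha> \<beta> where "b = \<alpha> *s a + \<beta> *s c" by (auto simp: span_pair_iff)
  then have "\<alpha> *s a + (-1) *s b + \<beta> *s c = 0" by (simp add: vector_smult_lneg algebra_simps)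
  then show False using indep3D[OF assms] by fastforce
qed

text \<open>Take \<open>w\<close> in the plane with the two coordinates of a nonvanishing \<open>2 \<times> 2\<close> minor
  of \<open>(a, b)\<close> equal to zero.\<close>
lemma indep2_extend_in_plane:
  assumes "indep2 a b" "bdot h a = 0" "bdot h b = 0"
  shows "\<exists>w. bdot h w = 0 \<and> indep3 a b (w::complex^4)"
proof -
  have "\<exists>p q. a$p * b$q - a$q * b$p \<noteq> 0"
  proof (rule ccontr)
    assume "\<not> ?thesis"
    then have minors: "a$p * b$q = a$q * b$p" for p q by auto
    obtain p where p: "a $ p \<noteq> 0" using indep2_nonzero[OF assms(1)] by (auto simp: vec_eq_iff)
    have "(b$p / a$p) *s a + (-1) *s b = 0"
      using minors[of p] p by (simp add: vec_eq_iff field_simps)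
    then show False using indep2D[OF assms(1)] by fastforce
  qed
  then obtain p q where pq: "a$p * b$q - a$q * b$p \<noteq> 0" by blast
  obtain w where w: "w \<noteq> 0" "bdot h w = 0" "w $ p = 0" "w $ q = 0"
    using exists_common_zero3[of h "axis p 1" "axis q 1"] by (auto simp: bdot_axis)
  have "indep3 a b w"
    unfolding indep3_def
  proof (intro allI impI)
    fix \<alpha> \<beta> \<gamma> assume h: "\<alpha> *s a + \<beta> *s b + \<gamma> *s w = 0"
    have "\<alpha> * a$p + \<beta> * b$p = 0" "\<alpha> * a$q + \<beta> * b$q = 0"
      using h w(3,4) by (auto simp: vec_eq_iff dest: spec[of _ p] spec[of _ q])
    moreover have
      "\<alpha> * (a$p * b$q - a$q * b$p) = b$q * (\<alpha> * a$p + \<beta> * b$p) - b$p * (\<alpha> * a$q + \<beta> * b$q)"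
      "\<beta> * (a$p * b$q - a$q * b$p) = a$p * (\<alpha> * a$q + \<beta> * b$q) - a$q * (\<alpha> * a$p + \<beta> * b$p)"
      by algebra+
    ultimately have "\<alpha> = 0" "\<beta> = 0" using pq by simp_all
    then show "\<alpha> = 0 \<and> \<beta> = 0 \<and> \<gamma> = 0" using h w(1) by simp
  qed
  then show ?thesis using w(2) by blast
qed

lemma det4_eq_0_imp_in_plane:
  assumes "det4 w u c v = 0" "indep2 u v" "c \<notin> vec.span {u, v}"
  shows "\<exists>p1 p2 p3. w = p1 *s u + p2 *s c + p3 *s v"
proof -
  obtain y1 y2 y3 y4 where y: "y1 \<noteq> 0 \<or> y2 \<noteq> 0 \<or> y3 \<noteq> 0 \<or> y4 \<noteq> 0"
    "y1 *s w + (y2 *s u + y3 *s c + y4 *s v) = 0"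
    using det4_eq_0_imp_dependent[OF assms(1)] by (auto simp: add.assoc)
  have "y1 \<noteq> 0"
  proof
    assume "y1 = 0"
    have "y3 = 0"
    proof (rule ccontr)
      assume "y3 \<noteq> 0"
      have "y3 *s c + (y2 *s u + y4 *s v) = 0" using y(2) \<open>y1 = 0\<close> by (simp add: algebra_simps)
      then have "c = (- inverse y3) *s (y2 *s u + y4 *s v)"
        by (rule smult_add_eq_0_solve[OF \<open>y3 \<noteq> 0\<close>])
      moreover have "(- inverse y3) *s (y2 *s u + y4 *s v) \<in> vec.span {u, v}"
        by (intro vec.span_scale vec.span_add vec.span_base) auto
      ultimately show False using assms(3) by simp
    qed
    then show False
      using y \<open>y1 = 0\<close> indep2D[OF assms(2), of y2 y4] by simp
  qed
  then have "w = (- inverse y1) *s (y2 *s u + y3 *s c + y4 *s v)"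
    using y(2) by (rule smult_add_eq_0_solve)
  then have "w = (- inverse y1 * y2) *s u + (- inverse y1 * y3) *s c + (- inverse y1 * y4) *s v"
    by (simp add: vector_add_ldistrib vector_smult_assoc)
  then show ?thesis by blast
qed

lemma camera_rows_independent:
  assumes "camera C" "(\<Sum>i\<in>UNIV. c i *s row i C) = 0"
  shows "c i = 0"
proof (rule ccontr)
  assume ci: "c i \<noteq> 0"
  define R where "R = (\<lambda>j. row j C) ` (UNIV - {i})"
  have "c i *s row i C + (\<Sum>j\<in>UNIV - {i}. c j *s row j C) = 0"
    using assms(2) by (simp add: sum.remove[of UNIV i])
  then have "row i C = (- inverse (c i)) *s (\<Sum>j\<in>UNIV - {i}. c j *s row j C)"
    by (rule smult_add_eq_0_solve[OF ci])
  also have "\<dots> \<in> vec.span R"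
    unfolding R_def by (intro vec.span_scale vec.span_sum vec.span_base) auto
  finally have "rows C \<subseteq> vec.span R"
    by (auto simp: rows_def R_def intro: vec.span_base)
  then have "vec.dim (rows C) \<le> card R" by (intro vec.dim_le_card) (auto simp: R_def)
  also have "\<dots> \<le> card (UNIV - {i})" unfolding R_def by (rule card_image_le) simp
  finally have "vec.dim (rows C) \<le> 2" by simp
  moreover have "vec.dim (rows C) = 3" using assms(1) unfolding camera_def row_rank_def_gen .
  ultimately show False by linarith
qed

lemma camera_right_inverse: "camera C \<Longrightarrow> \<exists>B. C ** B = mat 1"
  using camera_rows_independent matrix_right_invertible_independent_rows by blast

lemma camera_left_kernel:
  assumes "camera C" "l v* C = 0"
  shows "l = 0"
proof -
  obtain B where "C ** B = mat 1" using camera_right_inverse[OF assms(1)] by blast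
  then have "l = (l v* C) v* B" by (simp add: vector_matrix_mul_assoc)
  then show ?thesis using assms(2) by simp
qed

lemma center_nonzero: "center C \<noteq> 0"
  and center_kernel [simp]: "C *v center C = 0"
proof -
  obtain z where "z \<noteq> 0" "bdot (C $ 1) z = 0" "bdot (C $ 2) z = 0" "bdot (C $ 3) z = 0"
    using exists_common_zero3 by blast
  then have "\<exists>c. c \<noteq> 0 \<and> C *v c = 0" by (auto simp: vec_eq_iff forall_3 matrix_vector_nth_bdot)
  then have "center C \<noteq> 0 \<and> C *v center C = 0" unfolding center_def by (rule someI_ex)
  then show "center C \<noteq> 0" "C *v center C = 0" by simp_all
qed

lemma camera_kernel:
  assumes "camera C" "C *v P = 0"
  shows "\<exists>\<mu>. P = \<mu> *s center C"
proof -
  let ?c = "center C"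
  obtain k where k: "?c $ k \<noteq> 0" using center_nonzero[of C] by (auto simp: vec_eq_iff)
  have det: "det4 (C $ 1) (C $ 2) (C $ 3) (axis k 1) \<noteq> 0"
  proof
    assume "det4 (C $ 1) (C $ 2) (C $ 3) (axis k 1) = 0"
    then obtain y1 y2 y3 y4 where y: "y1 \<noteq> 0 \<or> y2 \<noteq> 0 \<or> y3 \<noteq> 0 \<or> y4 \<noteq> 0"
      "y1 *s C $ 1 + y2 *s C $ 2 + y3 *s C $ 3 + y4 *s axis k 1 = 0"
      by (rule det4_eq_0_imp_dependent[THEN exE]) blast
    have "bdot (C $ i) ?c = 0" for i
      using center_kernel[of C] matrix_vector_nth_bdot[of C ?c i] by simp
    moreover have "bdot (y1 *s C $ 1 + y2 *s C $ 2 + y3 *s C $ 3 + y4 *s axis k 1) ?c = 0"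
      using y(2) by simp
    ultimately have "y4 = 0" using k by (simp add: bdot_bilinear bdot_axis)
    define y :: "complex^3" where "y = vector [y1, y2, y3]"
    have "(y v* C) $ j = y1 * C$1$j + y2 * C$2$j + y3 * C$3$j" for j
      by (simp add: y_def vector_matrix_mult_def sum_3 mult.commute)
    moreover have "y1 * C$1$j + y2 * C$2$j + y3 * C$3$j = 0" for j
      using y(2) \<open>y4 = 0\<close> by (simp add: vec_eq_iff)
    ultimately have "y = 0" using camera_left_kernel[OF assms(1)] by (simp add: vec_eq_iff)
    then show False using y(1) \<open>y4 = 0\<close> by (simp add: y_def vec_eq_iff forall_3)
  qed
  define Q where "Q = P - (P $ k / ?c $ k) *s ?c"
  have "C *v Q = 0"
    using assms(2) by (simp add: Q_def matrix_vector_mult_diff_distrib vector_scalar_commute)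
  then have "bdot (C $ i) Q = 0" for i using matrix_vector_nth_bdot[of C Q i] by simp
  moreover have "bdot (axis k 1) Q = 0" using k by (simp add: Q_def bdot_axis)
  ultimately have "Q = 0" using det4_neq_0_no_common_zero[OF det] by blast
  then have "P = (P $ k / ?c $ k) *s ?c" unfolding Q_def by simp
  then show ?thesis by blast
qed

lemma right_inverse_back_projection:
  assumes "camera C" "C ** B = mat 1"
  shows "\<exists>\<mu>. B *v (C *v Y) = Y + \<mu> *s center C"
proof -
  have "C *v (B *v (C *v Y)) = C *v Y"
    by (metis assms(2) matrix_vector_mul_assoc matrix_vector_mul_lid)
  then have "C *v (B *v (C *v Y) - Y) = 0"
    by (simp add: matrix_vector_mult_diff_distrib)
  then obtain \<mu> where "B *v (C *v Y) - Y = \<mu> *s center C" using camera_kernel[OF assms(1)] by blast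
  then show ?thesis by (metis add.commute diff_add_cancel)
qed

lemma camera_image_indep2:
  assumes "camera C" "indep2 u v" "center C \<notin> vec.span {u, v}"
  shows "indep2 (C *v u) (C *v v)"
  unfolding indep2_def
proof (intro allI impI)
  fix y1 y2 assume "y1 *s (C *v u) + y2 *s (C *v v) = 0"
  then have "C *v (y1 *s u + y2 *s v) = 0"
    by (simp add: matrix_vector_right_distrib vector_scalar_commute)
  then obtain \<mu> where \<mu>: "y1 *s u + y2 *s v = \<mu> *s center C" using camera_kernel[OF assms(1)] by blast
  have "\<mu> = 0"
  proof (rule ccontr)
    assume "\<mu> \<noteq> 0"
    then have "center C = inverse \<mu> *s (y1 *s u + y2 *s v)" by (simp add: \<mu> vector_smult_assoc)
    moreover have "inverse \<mu> *s (y1 *s u + y2 *s v) \<in> vec.span {u, v}"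
      by (intro vec.span_scale vec.span_add vec.span_base) auto
    ultimately show False using assms(3) by simp
  qed
  then show "y1 = 0 \<and> y2 = 0" using \<mu> indep2D[OF assms(2)] by simp
qed

lemma line_image_nonzero:
  assumes "camera C" "indep2 u v" "center C \<notin> vec.span {u, v}"
  shows "line_image C u v \<noteq> 0"
  using cross3c_eq_0_imp_dependent indep2D[OF camera_image_indep2[OF assms]]
  unfolding line_image_def by blast

lemma proj_rep_line_image:
  assumes "camera C" "indep2 X u" "center C \<notin> vec.span {X, u}"
    and "l \<noteq> 0" "bdot l (C *v X) = 0" "bdot l (C *v u) = 0"
  shows "proj_rep l (line_image C X u)"
  using proj_rep_cross3c[OF assms(4-6)] line_image_nonzero[OF assms(1-3)]
  unfolding line_image_def by blast

lemma line_image_center [simp]: "line_image C X (center C) = 0"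
  by (simp add: line_image_def)

lemma on_line_image_imp_image:
  assumes "camera C" "indep2 u v" "center C \<notin> vec.span {u, v}"
    and "bdot (line_image C u v) z = 0"
  shows "\<exists>s t. z = C *v (s *s u + t *s v)"
proof -
  have "det (rows3 (C *v u) (C *v v) z) = 0"
    using assms(4) by (simp add: det_rows3_cross3c line_image_def)
  then obtain y1 y2 y3 where y: "y1 \<noteq> 0 \<or> y2 \<noteq> 0 \<or> y3 \<noteq> 0"
    "y1 *s (C *v u) + y2 *s (C *v v) + y3 *s z = 0"
    using det_rows3_eq_0_imp_dependent by blast
  have "y3 \<noteq> 0" using y indep2D[OF camera_image_indep2[OF assms(1-3)]] by auto
  moreover have "y3 *s z + (y1 *s (C *v u) + y2 *s (C *v v)) = 0"
    using y(2) by (metis add.commute)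
  ultimately have "z = (- inverse y3) *s (y1 *s (C *v u) + y2 *s (C *v v))"
    by (rule smult_add_eq_0_solve)
  also have "\<dots> = C *v ((- inverse y3 * y1) *s u + (- inverse y3 * y2) *s v)"
    by (simp only: matrix_vector_right_distrib vector_scalar_commute vector_add_ldistrib
        vector_smult_assoc)
  finally show ?thesis by blast
qed

section \<open>Anchored point multiview varieties\<close>

lemma anch_point_mv_subset:
  "anch_point_mv Cs u v \<subseteq> {x \<in> point_mv Cs. \<forall>k. bdot (line_image (Cs k) u v) (x k) = 0}"
proof safe
  fix x assume x: "x \<in> anch_point_mv Cs u v"
  then show "x \<in> point_mv Cs"
    unfolding anch_point_mv_def point_mv_def by (rule subsetD[OF zclosure_mono, rotated]) blast
  fix k
  show "bdot (line_image (Cs k) u v) (x k) = 0"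
  proof (rule zclosure_vanishing[OF x[unfolded anch_point_mv_def] multihom_poly_bdot])
    fix y assume "y \<in> {x. \<exists>X\<in>vec.span {u, v}. X \<noteq> 0 \<and> (\<forall>k. proj_rep (x k) (Cs k *v X))}"
    then obtain X where "X \<in> vec.span {u, v}" "proj_rep (y k) (Cs k *v X)" by blast
    moreover from this(2) obtain a where "y k = a *s (Cs k *v X)" by (auto simp: proj_rep_def)
    ultimately show "bdot (line_image (Cs k) u v) (y k) = 0"
      by (auto simp: span_pair_iff line_image_def matrix_vector_right_distrib vector_scalar_commute
          bdot_bilinear bdot_cross3c_left bdot_cross3c_right)
  qed
qed

text \<open>The epipolar constraint: the back-projections of \<open>x a\<close> and \<open>x b\<close> are lines through the
  respective centers that meet, namely in the point \<open>X\<close> when \<open>x\<close> is the image of \<open>X\<close>.\<close>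
lemma point_mv_epipolar:
  assumes cam: "\<And>k. camera (Cs k)" and B: "\<And>k. Cs k ** B k = mat 1" and x: "x \<in> point_mv Cs"
  shows "det4 (center (Cs a)) (B a *v x a) (center (Cs b)) (B b *v x b) = 0"
proof -
  let ?A = "\<lambda>x. rows4 (center (Cs a)) (B a *v x a) (center (Cs b)) (B b *v x b)"
  have "(\<exists>w. \<forall>x. ?A x $ i = w) \<or> (\<exists>k M. \<forall>x. ?A x $ i = M *v x k)" for i
    using exhaust_4[of i] by (elim disjE; simp; blast)
  then obtain d where poly:
    "multihom_poly d (\<lambda>x. det4 (center (Cs a)) (B a *v x a) (center (Cs b)) (B b *v x b))"
    unfolding det4_def using multihom_poly_det_rows[of ?A] by blast
  show ?thesis
  proof (rule zclosure_vanishing[OF x[unfolded point_mv_def] poly])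
    fix y assume "y \<in> {x. \<exists>X. X \<noteq> 0 \<and> (\<forall>k. proj_rep (x k) (Cs k *v X))}"
    then obtain X where "proj_rep (y a) (Cs a *v X)" "proj_rep (y b) (Cs b *v X)" by blast
    then obtain \<alpha> \<beta> where "y a = \<alpha> *s (Cs a *v X)" "y b = \<beta> *s (Cs b *v X)"
      by (auto simp: proj_rep_def)
    moreover obtain \<mu> \<nu> where "B a *v (Cs a *v X) = X + \<mu> *s center (Cs a)"
      "B b *v (Cs b *v X) = X + \<nu> *s center (Cs b)"
      using right_inverse_back_projection[OF cam B] by metis
    ultimately show "det4 (center (Cs a)) (B a *v y a) (center (Cs b)) (B b *v y b) = 0"
      by (simp add: vector_scalar_commute det4_multilinear det4_alternating)
  qed
qed

lemma point_mv_epipolar_on_line: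
  assumes cam: "\<And>k. camera (Cs k)" and x: "x \<in> point_mv Cs"
    and st: "\<And>k. x k = Cs k *v (s k *s u + t k *s v)"
  shows "(s a * t b - t a * s b) * det4 (center (Cs a)) u (center (Cs b)) v = 0"
proof -
  obtain B where B: "\<And>k. Cs k ** B k = mat 1" using camera_right_inverse[OF cam] by metis
  obtain \<mu> \<nu> where "B a *v x a = s a *s u + t a *s v + \<mu> *s center (Cs a)"
    "B b *v x b = s b *s u + t b *s v + \<nu> *s center (Cs b)"
    using right_inverse_back_projection[OF cam B] st by metis
  then have "det4 (center (Cs a)) (B a *v x a) (center (Cs b)) (B b *v x b)
      = (s a * t b - t a * s b) * det4 (center (Cs a)) u (center (Cs b)) v"
    by (simp add: det4_multilinear det4_alternating det4_swap_24[of _ u _ v] algebra_simps)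
  then show ?thesis using point_mv_epipolar[OF cam B x] by simp
qed

lemma det4_neq_0_pencil:
  assumes "det4 p u q v \<noteq> 0" "indep2 u v" "r \<notin> vec.span {u, v}"
  shows "det4 p u r v \<noteq> 0 \<or> det4 q u r v \<noteq> 0"
proof (rule ccontr)
  assume "\<not> ?thesis"
  then obtain p1 p2 p3 q1 q2 q3 where "p = p1 *s u + p2 *s r + p3 *s v" "q = q1 *s u + q2 *s r + q3 *s v"
    using det4_eq_0_imp_in_plane[OF _ assms(2,3)] by meson
  then have "det4 p u q v = 0" by (simp add: det4_multilinear det4_alternating)
  then show False using assms(1) by simp
qed

lemma det2_eq_0_trans:
  fixes si ti sj tj sk tk :: "'a::field"
  assumes "sj \<noteq> 0 \<or> tj \<noteq> 0" "si * tj - ti * sj = 0" "sj * tk - tj * sk = 0"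
  shows "si * tk - ti * sk = 0"
proof -
  have "sj * (si * tk - ti * sk) = si * (sj * tk - tj * sk) + sk * (si * tj - ti * sj)"
    "tj * (si * tk - ti * sk) = ti * (sj * tk - tj * sk) + tk * (si * tj - ti * sj)"
    by algebra+
  then show ?thesis using assms by auto
qed

lemma det2_eq_0_proportional:
  fixes s t :: "'k \<Rightarrow> 'a::field"
  assumes "s i \<noteq> 0 \<or> t i \<noteq> 0" "\<And>k. s i * t k - t i * s k = 0"
  shows "\<exists>r. \<forall>k. s k = r k * s i \<and> t k = r k * t i"
proof (cases "s i = 0")
  case True
  then show ?thesis using assms by (intro exI[of _ "\<lambda>k. t k / t i"]) (auto simp: field_simps)
next
  case False
  then show ?thesis using assms by (intro exI[of _ "\<lambda>k. s k / s i"]) (auto simp: field_simps)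
qed

lemma anch_point_mv_supset:
  assumes cam: "\<And>k. camera (Cs k)" and uv: "indep2 u v"
    and nc: "\<And>k. center (Cs k) \<notin> vec.span {u, v}"
    and ij: "vec.span {center (Cs i), center (Cs j), u, v} = UNIV"
    and x: "x \<in> point_mv Cs" and on: "\<And>k. bdot (line_image (Cs k) u v) (x k) = 0"
  shows "x \<in> anch_point_mv Cs u v"
proof -
  let ?c = "\<lambda>k. center (Cs k)"
  have xpt: "x \<in> ptuples" using x zclosure_subset_ptuples unfolding point_mv_def by blast
  obtain s t where st: "\<And>k. x k = Cs k *v (s k *s u + t k *s v)"
    using on_line_image_imp_image[OF cam uv nc on] by metis
  have st0: "s k \<noteq> 0 \<or> t k \<noteq> 0" for k
    using xpt st[of k] by (auto simp: ptuples_def)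
  note epi = point_mv_epipolar_on_line[OF cam x st]
  have "{?c i, u, ?c j, v} = {?c i, ?c j, u, v}" by auto
  then have dij: "det4 (?c i) u (?c j) v \<noteq> 0"
    using det4_neq_0_if_span_UNIV ij by metis
  have "s i * t k - t i * s k = 0" for k
  proof (cases "det4 (?c i) u (?c k) v = 0")
    case True
    then have "det4 (?c j) u (?c k) v \<noteq> 0" using det4_neq_0_pencil[OF dij uv nc] by blast
    then have "s j * t k - t j * s k = 0" using epi[of j k] by simp
    moreover have "s i * t j - t i * s j = 0" using epi[of i j] dij by simp
    ultimately show ?thesis using det2_eq_0_trans[OF st0[of j]] by blast
  qed (use epi[of i k] in simp)
  then obtain r where r: "\<And>k. s k = r k * s i" "\<And>k. t k = r k * t i"
    using det2_eq_0_proportional[of s i t, OF st0[of i]] by metis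
  define X where "X = s i *s u + t i *s v"
  have xk: "x k = r k *s (Cs k *v X)" for k
    unfolding st[of k] X_def r(1)[of k] r(2)[of k]
    by (simp add: matrix_vector_right_distrib vector_scalar_commute vector_smult_assoc)
  have "\<forall>k. proj_rep (x k) (Cs k *v X)"
    using xk xpt by (auto simp: proj_rep_def ptuples_def)
  moreover have "X \<in> vec.span {u, v}" "X \<noteq> 0"
    using xk[of i] xpt by (auto simp: X_def span_pair_iff ptuples_def)
  ultimately show ?thesis
    unfolding anch_point_mv_def using xpt by (intro zclosureI) auto
qed

section \<open>Anchored line multiview varieties\<close>

definition anch_line_image :: "('m::finite \<Rightarrow> complex^4^3) \<Rightarrow> complex^4 \<Rightarrow> ('m \<Rightarrow> complex^3) set"
  where "anch_line_image Cs X = {l. \<exists>u. is_line X u \<and> (\<forall>k. proj_rep (l k) (line_image (Cs k) X u))}"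

lemma anch_line_mv_eq_zclosure: "anch_line_mv Cs X = zclosure (anch_line_image Cs X)"
  by (simp add: anch_line_mv_def anch_line_image_def)

lemma anch_line_mv_subset:
  "anch_line_mv Cs X \<subseteq> {l \<in> line_mv Cs. \<forall>k. bdot (l k) (Cs k *v X) = 0}"
proof safe
  fix l assume l: "l \<in> anch_line_mv Cs X"
  then show "l \<in> line_mv Cs"
    unfolding anch_line_mv_def line_mv_def by (rule subsetD[OF zclosure_mono, rotated]) blast
  fix k
  have "bdot (Cs k *v X) (l k) = 0"
  proof (rule zclosure_vanishing[OF l[unfolded anch_line_mv_eq_zclosure] multihom_poly_bdot])
    fix y assume "y \<in> anch_line_image Cs X"
    then obtain u where "proj_rep (y k) (line_image (Cs k) X u)"
      unfolding anch_line_image_def by blast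
    then obtain a where "y k = a *s line_image (Cs k) X u" by (auto simp: proj_rep_def)
    then show "bdot (Cs k *v X) (y k) = 0"
      by (simp add: line_image_def bdot_bilinear bdot_commute[of _ "cross3c _ _"] bdot_cross3c_left)
  qed
  then show "bdot (l k) (Cs k *v X) = 0" by (simp add: bdot_commute)
qed

lemma det4_planes_through_line:
  assumes "indep2 p q" "bdot h1 p = 0" "bdot h2 p = 0" "bdot h3 p = 0"
    and "bdot h1 q = 0" "bdot h2 q = 0" "bdot h3 q = 0"
  shows "det4 h1 h2 h3 w = 0"
proof (rule ccontr)
  assume det: "det4 h1 h2 h3 w \<noteq> 0"
  define z where "z = bdot w q *s p - bdot w p *s q"
  have "bdot h1 z = 0" "bdot h2 z = 0" "bdot h3 z = 0" "bdot w z = 0"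
    using assms(2-) by (simp_all add: z_def bdot_bilinear)
  then have "z = 0" using det4_neq_0_no_common_zero[OF det] by blast
  then have "bdot w q *s p + (- bdot w p) *s q = 0" by (simp add: z_def vector_smult_lneg)
  then have "bdot w p = 0" using indep2D[OF assms(1)] neg_equal_0_iff_equal by blast
  then have "p = 0" using det4_neq_0_no_common_zero[OF det] assms(2-4) by blast
  then show False using indep2_nonzero[OF assms(1)] by simp
qed

text \<open>The back-projected planes \<open>l k v* Cs k\<close> of a point of the line multiview variety
  all contain a common line, hence any three of them are dependent.\<close>
lemma line_mv_back_projected_planes:
  assumes "l \<in> line_mv Cs"
  shows "det4 (l a v* Cs a) (l b v* Cs b) (l d v* Cs d) w = 0"
proof -
  let ?A = "\<lambda>x. rows4 (x a v* Cs a) (x b v* Cs b) (x d v* Cs d) w"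
  have "(\<exists>w. \<forall>x. ?A x $ i = w) \<or> (\<exists>k M. \<forall>x. ?A x $ i = M *v x k)" for i
    using exhaust_4[of i] by (elim disjE; simp; metis transpose_matrix_vector)
  then obtain deg where poly:
    "multihom_poly deg (\<lambda>x. det4 (x a v* Cs a) (x b v* Cs b) (x d v* Cs d) w)"
    unfolding det4_def using multihom_poly_det_rows[of ?A] by blast
  show ?thesis
  proof (rule zclosure_vanishing[OF assms[unfolded line_mv_def] poly])
    fix y assume "y \<in> {l. \<exists>u v. is_line u v \<and> (\<forall>k. proj_rep (l k) (line_image (Cs k) u v))}"
    then obtain p q where pq: "indep2 p q" "\<And>k. proj_rep (y k) (line_image (Cs k) p q)"
      by (auto simp: is_line_iff_indep2)
    have "bdot (y k v* Cs k) p = 0 \<and> bdot (y k v* Cs k) q = 0" for k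
    proof -
      obtain \<alpha> where "y k = \<alpha> *s line_image (Cs k) p q" using pq(2) by (auto simp: proj_rep_def)
      then show ?thesis
        by (simp add: bdot_vector_matrix line_image_def bdot_bilinear bdot_cross3c_left
            bdot_cross3c_right)
    qed
    then show "det4 (y a v* Cs a) (y b v* Cs b) (y d v* Cs d) w = 0"
      using det4_planes_through_line[OF pq(1)] by blast
  qed
qed

lemma det4_vanishing_imp_dependent:
  assumes "\<And>w. det4 h1 h2 h3 w = 0"
  shows "\<exists>y1 y2 y3. (y1 \<noteq> 0 \<or> y2 \<noteq> 0 \<or> y3 \<noteq> 0) \<and> y1 *s h1 + y2 *s h2 + y3 *s h3 = 0"
proof -
  obtain z where z: "z \<noteq> 0" "bdot h1 z = 0" "bdot h2 z = 0" "bdot h3 z = 0"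
    using exists_common_zero3 by blast
  then obtain p where p: "z $ p \<noteq> 0" by (auto simp: vec_eq_iff)
  obtain y1 y2 y3 y4 where y: "y1 \<noteq> 0 \<or> y2 \<noteq> 0 \<or> y3 \<noteq> 0 \<or> y4 \<noteq> 0"
    "y1 *s h1 + y2 *s h2 + y3 *s h3 + y4 *s axis p 1 = 0"
    using det4_eq_0_imp_dependent[OF assms] by blast
  have "bdot (y1 *s h1 + y2 *s h2 + y3 *s h3 + y4 *s axis p 1) z = y4 * z $ p"
    using z by (simp add: bdot_bilinear bdot_axis)
  then have "y4 = 0" using y(2) p by simp
  then show ?thesis using y by auto
qed

lemma det4_vanishing_common_zero:
  assumes "\<And>w. det4 h1 h2 h3 w = 0" "indep2 h1 h2" "bdot h1 z = 0" "bdot h2 z = 0"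
  shows "bdot h3 z = 0"
proof -
  obtain y1 y2 y3 where y: "y1 \<noteq> 0 \<or> y2 \<noteq> 0 \<or> y3 \<noteq> 0" "y1 *s h1 + y2 *s h2 + y3 *s h3 = 0"
    using det4_vanishing_imp_dependent[OF assms(1)] by blast
  have "y3 \<noteq> 0" using y indep2D[OF assms(2), of y1 y2] by auto
  have "bdot (y1 *s h1 + y2 *s h2 + y3 *s h3) z = y3 * bdot h3 z"
    using assms(3,4) by (simp add: bdot_bilinear)
  then show ?thesis using y(2) \<open>y3 \<noteq> 0\<close> by simp
qed

lemma in_anch_line_image:
  assumes cam: "\<And>k. camera (Cs k)" and Xu: "indep2 X u"
    and nc: "\<And>k. center (Cs k) \<notin> vec.span {X, u}" and l0: "\<And>k. l k \<noteq> 0"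
    and lX: "\<And>k. bdot (l k) (Cs k *v X) = 0" and lu: "\<And>k. bdot (l k) (Cs k *v u) = 0"
  shows "l \<in> anch_line_image Cs X"
  using proj_rep_line_image[OF cam Xu nc l0 lX lu] Xu
  by (auto simp: anch_line_image_def is_line_iff_indep2)

lemma finite_params_in_span:
  assumes "indep3 X b w" "c \<notin> vec.span {X}"
  shows "finite {t. c \<in> vec.span {X, b + t *s w}}"
proof -
  have "t = t'" if in_span: "c \<in> vec.span {X, b + t *s w}" "c \<in> vec.span {X, b + t' *s w}"
    for t t'
  proof -
    obtain \<alpha> \<beta> where c: "c = \<alpha> *s X + \<beta> *s (b + t *s w)"
      using in_span(1) unfolding span_pair_iff by blast
    obtain \<alpha>' \<beta>' where c': "c = \<alpha>' *s X + \<beta>' *s (b + t' *s w)"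
      using in_span(2) unfolding span_pair_iff by blast
    have "(\<alpha> - \<alpha>') *s X + (\<beta> - \<beta>') *s b + (\<beta> * t - \<beta>' * t') *s w = 0"
      using c c' by (simp add: vec_eq_iff algebra_simps)
    then have "\<beta> = \<beta>'" and "\<beta> * t = \<beta>' * t'"
      using indep3D[OF assms(1)] by (metis eq_iff_diff_eq_0)+
    moreover have "\<beta> \<noteq> 0" using c assms(2) by (auto simp: span_singleton_iff)
    ultimately show "t = t'" by simp
  qed
  then have "{t. c \<in> vec.span {X, b + t *s w}} \<subseteq> {SOME t. c \<in> vec.span {X, b + t *s w}}"
    using someI[where P = "\<lambda>t. c \<in> vec.span {X, b + t *s w}"] by blast
  then show ?thesis by (rule finite_subset) simp
qed

lemma lines_through_center_normal_form:
  assumes cam: "\<And>k. camera (Cs k)" and X: "\<And>k. X \<notin> vec.span {center (Cs k)}"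
    and cc: "\<And>k. k \<noteq> j \<Longrightarrow> center (Cs k) \<notin> vec.span {center (Cs j), X}"
    and l0: "\<And>k. l k \<noteq> 0" and lX: "\<And>k. bdot (l k) (Cs k *v X) = 0"
    and lc: "\<And>k. bdot (l k) (Cs k *v center (Cs j)) = 0"
  obtains w a b where "indep3 X (center (Cs j)) w" "b \<noteq> 0" "l j = b *s line_image (Cs j) X w"
    and "\<And>k. k \<noteq> j \<Longrightarrow> a k \<noteq> 0 \<and> l k = a k *s line_image (Cs k) X (center (Cs j))"
proof -
  let ?c = "\<lambda>k. center (Cs k)"
  have Xc: "indep2 X (?c k)" for k
    using indep2_iff_not_in_span center_nonzero X by blast
  obtain w where w: "bdot (l j v* Cs j) w = 0" "indep3 X (?c j) w"
    using indep2_extend_in_plane[OF Xc, of "l j v* Cs j" j] lX[of j] by (auto simp: bdot_vector_matrix)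
  have "proj_rep (l j) (line_image (Cs j) X w)"
    using proj_rep_line_image[OF cam indep3_imp_indep2_13 indep3_imp_not_in_span_23, OF w(2) w(2)]
      l0 lX w(1) by (simp add: bdot_vector_matrix)
  then obtain b where "b \<noteq> 0" "l j = b *s line_image (Cs j) X w"
    by (auto simp: proj_rep_def)
  moreover have "\<exists>a. a \<noteq> 0 \<and> l k = a *s line_image (Cs k) X (?c j)" if "k \<noteq> j" for k
  proof -
    have "?c k \<notin> vec.span {X, ?c j}" using cc[OF that] by (simp add: insert_commute)
    then have "proj_rep (l k) (line_image (Cs k) X (?c j))"
      using proj_rep_line_image[OF cam Xc _ l0 lX lc] by blast
    then show ?thesis by (auto simp: proj_rep_def)
  qed
  then obtain a where "\<And>k. k \<noteq> j \<Longrightarrow> a k \<noteq> 0 \<and> l k = a k *s line_image (Cs k) X (?c j)"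
    by metis
  ultimately show ?thesis using that w(2) by blast
qed

text \<open>If the back-projected planes of all cameras contain the line through \<open>X\<close> and the
  \<open>j\<close>-th center, then \<open>l\<close> is the limit of the images of the lines through \<open>X\<close> and
  \<open>c\<^sub>j + t w\<close> as \<open>t \<rightarrow> 0\<close>, for a suitable \<open>w\<close> in the \<open>j\<close>-th back-projected plane.\<close>
lemma anch_line_mv_limit:
  assumes cam: "\<And>k. camera (Cs k)" and X: "\<And>k. X \<notin> vec.span {center (Cs k)}"
    and cc: "\<And>k. k \<noteq> j \<Longrightarrow> center (Cs k) \<notin> vec.span {center (Cs j), X}"
    and l: "l \<in> ptuples" and lX: "\<And>k. bdot (l k) (Cs k *v X) = 0"
    and lc: "\<And>k. bdot (l k) (Cs k *v center (Cs j)) = 0"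
  shows "l \<in> anch_line_mv Cs X"
proof -
  let ?c = "\<lambda>k. center (Cs k)"
  have l0: "\<And>k. l k \<noteq> 0" using l by (simp add: ptuples_def)
  obtain w a b where w: "indep3 X (?c j) w" and b: "b \<noteq> 0" "l j = b *s line_image (Cs j) X w"
    and a: "\<And>k. k \<noteq> j \<Longrightarrow> a k \<noteq> 0 \<and> l k = a k *s line_image (Cs k) X (?c j)"
    using lines_through_center_normal_form[of Cs, OF cam X cc l0 lX lc] by blast
  have cX: "?c k \<notin> vec.span {X}" for k
  proof -
    have "indep2 (?c k) X"
      using indep2_iff_not_in_span[of "?c k" X] indep2_commute center_nonzero X by blast
    then show ?thesis using indep2_iff_not_in_span[of X] indep2_nonzero by blast
  qed
  define F where "F = (\<Union>k. {t. ?c k \<in> vec.span {X, ?c j + t *s w}})"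
  have "finite F" unfolding F_def using finite_params_in_span[OF w cX] by simp
  define Q where "Q k = (if k = j then 0 else a k *s line_image (Cs k) X w)" for k
  show ?thesis
    unfolding anch_line_mv_eq_zclosure
  proof (rule zclosure_line_limit[OF l \<open>finite F\<close>])
    fix t assume "t \<notin> F"
    define u where "u = ?c j + t *s w"
    have Xu: "indep2 X u" unfolding u_def using indep3_imp_indep2_shift[OF w] .
    have nc: "?c k \<notin> vec.span {X, u}" for k using \<open>t \<notin> F\<close> by (auto simp: F_def u_def)
    have "t \<noteq> 0"
      using nc[of j] vec.span_base[of "?c j" "{X, ?c j}"] by (auto simp: u_def)
    have li: "line_image (Cs k) X u = line_image (Cs k) X (?c j) + t *s line_image (Cs k) X w" for k
      by (simp add: line_image_def u_def matrix_vector_right_distrib vector_scalar_commute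
          cross3c_add_right cross3c_scale_right)
    have "\<exists>r. r \<noteq> 0 \<and> l k + t *s Q k = r *s line_image (Cs k) X u" for k
    proof (cases "k = j")
      case True
      then show ?thesis
        using b \<open>t \<noteq> 0\<close> by (intro exI[of _ "b / t"]) (simp add: Q_def li vector_smult_assoc)
    next
      case False
      then show ?thesis
        using a[OF False] by (intro exI[of _ "a k"])
          (simp add: Q_def li vector_add_ldistrib vector_smult_assoc mult.commute)
    qed
    then have "proj_rep (l k + t *s Q k) (line_image (Cs k) X u)" for k
      using line_image_nonzero[OF cam Xu nc] by (auto simp: proj_rep_def)
    then show "(\<lambda>k. l k + t *s Q k) \<in> anch_line_image Cs X"
      unfolding anch_line_image_def using Xu by (auto simp: is_line_iff_indep2)
  qed
qed

lemma anch_line_mv_supset: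
  assumes cam: "\<And>k. camera (Cs k)" and X: "\<And>k. X \<notin> vec.span {center (Cs k)}"
    and cc: "\<And>i j. j \<noteq> i \<Longrightarrow> center (Cs j) \<notin> vec.span {center (Cs i), X}"
    and l: "l \<in> line_mv Cs" and lX: "\<And>k. bdot (l k) (Cs k *v X) = 0"
  shows "l \<in> anch_line_mv Cs X"
proof -
  let ?c = "\<lambda>k. center (Cs k)"
  define H where "H k = l k v* Cs k" for k
  have lpt: "l \<in> ptuples" using l zclosure_subset_ptuples unfolding line_mv_def by blast
  have H0: "H k \<noteq> 0" for k using camera_left_kernel[OF cam] lpt by (auto simp: H_def ptuples_def)
  have HX: "bdot (H k) X = 0" and Hc: "bdot (H k) (?c k) = 0" for k
    using lX by (simp_all add: H_def bdot_vector_matrix)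
  show ?thesis
  proof (cases "\<exists>j. \<forall>k. bdot (H k) (?c j) = 0")
    case True
    then obtain j where "\<And>k. bdot (l k) (Cs k *v ?c j) = 0" by (auto simp: H_def bdot_vector_matrix)
    then show ?thesis using anch_line_mv_limit[OF cam X cc lpt lX] by blast
  next
    case False
    fix a
    obtain b where b: "bdot (H b) (?c a) \<noteq> 0" using False by blast
    have ab: "indep2 (H a) (H b)"
      unfolding indep2_def
    proof (intro allI impI)
      fix \<alpha> \<beta> assume "\<alpha> *s H a + \<beta> *s H b = 0"
      moreover have "bdot (\<alpha> *s H a + \<beta> *s H b) (?c a) = \<beta> * bdot (H b) (?c a)"
        using Hc by (simp add: bdot_bilinear)
      ultimately show "\<alpha> = 0 \<and> \<beta> = 0" using b H0 by simp
    qed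
    obtain r where r: "X $ r \<noteq> 0"
      using X[of a] vec.span_zero by (metis vec_eq_iff zero_index)
    obtain u where u: "u \<noteq> 0" "bdot (H a) u = 0" "bdot (H b) u = 0" "u $ r = 0"
      using exists_common_zero3[of "H a" "H b" "axis r 1"] by (auto simp: bdot_axis)
    have Xu: "indep2 X u"
      unfolding indep2_def
    proof (intro allI impI)
      fix \<alpha> \<beta> assume Xu: "\<alpha> *s X + \<beta> *s u = 0"
      then have "\<alpha> = 0" using r u(4) by (auto simp: vec_eq_iff dest: spec[of _ r])
      then show "\<alpha> = 0 \<and> \<beta> = 0" using Xu u(1) by simp
    qed
    have Hu: "bdot (H k) u = 0" for k
      by (rule det4_vanishing_common_zero[OF _ ab u(2,3)])
        (simp add: H_def line_mv_back_projected_planes[OF l])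
    have "?c k \<notin> vec.span {X, u}" for k
    proof
      assume "?c k \<in> vec.span {X, u}"
      then have "bdot (H k') (?c k) = 0" for k'
        using HX Hu by (auto simp: span_pair_iff bdot_bilinear)
      then show False using False by blast
    qed
    then have "l \<in> anch_line_image Cs X"
      using in_anch_line_image[of Cs, OF cam Xu] lpt lX Hu by (auto simp: ptuples_def H_def bdot_vector_matrix)
    then show ?thesis unfolding anch_line_mv_eq_zclosure using lpt by (rule zclosureI)
  qed
qed

theorem proposition1p2:
  fixes Cs :: "'m::finite \<Rightarrow> complex^4^3"
  assumes "camera_arrangement Cs"
  shows "(\<forall>u v. is_line u v \<and> (\<forall>k. center (Cs k) \<notin> vec.span {u, v}) \<and>
            (\<exists>i j. vec.span {center (Cs i), center (Cs j), u, v} = UNIV) \<longrightarrow>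
            anch_point_mv Cs u v =
              {x \<in> point_mv Cs. \<forall>k. bdot (line_image (Cs k) u v) (x k) = 0}) \<and>
         (\<forall>X. X \<noteq> 0 \<and> (\<forall>k. X \<notin> vec.span {center (Cs k)}) \<and>
            (\<forall>i j. j \<noteq> i \<longrightarrow> center (Cs j) \<notin> vec.span {center (Cs i), X}) \<longrightarrow>
            anch_line_mv Cs X =
              {l \<in> line_mv Cs. \<forall>k. bdot (l k) (Cs k *v X) = 0})"
proof -
  have cam: "\<And>k. camera (Cs k)" using assms by (simp add: camera_arrangement_def)
  show ?thesis
  proof (intro conjI allI impI)
    fix u v
    assume "is_line u v \<and> (\<forall>k. center (Cs k) \<notin> vec.span {u, v}) \<and>
      (\<exists>i j. vec.span {center (Cs i), center (Cs j), u, v} = UNIV)"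
    then show "anch_point_mv Cs u v =
        {x \<in> point_mv Cs. \<forall>k. bdot (line_image (Cs k) u v) (x k) = 0}"
      using anch_point_mv_subset[of Cs u v] anch_point_mv_supset[of Cs, OF cam]
      by (auto simp: is_line_iff_indep2)
  next
    fix X
    assume "X \<noteq> 0 \<and> (\<forall>k. X \<notin> vec.span {center (Cs k)}) \<and>
      (\<forall>i j. j \<noteq> i \<longrightarrow> center (Cs j) \<notin> vec.span {center (Cs i), X})"
    then show "anch_line_mv Cs X = {l \<in> line_mv Cs. \<forall>k. bdot (l k) (Cs k *v X) = 0}"
      using anch_line_mv_subset[of Cs X] anch_line_mv_supset[of Cs, OF cam] by blast
  qed
qed

end
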